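(* Let $M$ be a matroid on $E$, $\mathfrak{S}\subseteq\mathcal{P}(E)$, and $S\in\mathfrak{S}$ such that $M|_S$ is disconnected, say $M|_S=\bigoplus_i M|_{S_i}$. Suppose that for every $T\in\mathfrak{S}$ with $T\subseteq S$, each connected component of $M|_T$ also belongs to $\mathfrak{S}$. Then $a_{\mathfrak{S}}(S)=0$.
   Context: A matroid is connected if it is not a direct sum of two matroids on nonempty ground sets; connected components are the ground sets of the summands in the decomposition into connected matroids. For $\mathfrak{T}\subseteq\mathcal{P}(E)$ and $T\in\mathfrak{T}$: $c(T)=\#T-\mathrm{rk}\,T$ and $a_{\mathfrak{T}}(T)=c(T)-\sum_{U\in\mathfrak{T},U\subsetneq T}a_{\mathfrak{T}}(U)$ recursively, with $a_{\mathfrak{T}}(\varnothing)=0$. *)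

theory Defs
  imports Main
begin

definition matroid :: "'a set \<Rightarrow> ('a set \<Rightarrow> bool) \<Rightarrow> bool" where
  "matroid E indep \<longleftrightarrow> finite E \<and> indep {} \<and>
     (\<forall>I. indep I \<longrightarrow> I \<subseteq> E) \<and>
     (\<forall>I J. indep J \<longrightarrow> I \<subseteq> J \<longrightarrow> indep I) \<and>
     (\<forall>I J. indep I \<longrightarrow> indep J \<longrightarrow> card I < card J \<longrightarrow>
        (\<exists>x \<in> J - I. indep (insert x I)))"

definition rk :: "('a set \<Rightarrow> bool) \<Rightarrow> 'a set \<Rightarrow> nat" where
  "rk indep X = Max {card I | I. I \<subseteq> X \<and> indep I}"

definition restr :: "('a set \<Rightarrow> bool) \<Rightarrow> 'a set \<Rightarrow> ('a set \<Rightarrow> bool)" where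
  "restr indep S = (\<lambda>I. indep I \<and> I \<subseteq> S)"

definition dsum :: "('a set \<Rightarrow> bool) \<Rightarrow> ('a set \<Rightarrow> bool) \<Rightarrow> ('a set \<Rightarrow> bool)" where
  "dsum i1 i2 = (\<lambda>I. \<exists>I1 I2. I = I1 \<union> I2 \<and> i1 I1 \<and> i2 I2)"

definition connected_matroid :: "'a set \<Rightarrow> ('a set \<Rightarrow> bool) \<Rightarrow> bool" where
  "connected_matroid E indep \<longleftrightarrow>
     \<not> (\<exists>A B i1 i2. A \<noteq> {} \<and> B \<noteq> {} \<and> A \<inter> B = {} \<and> A \<union> B = E \<and>
          matroid A i1 \<and> matroid B i2 \<and> indep = dsum i1 i2)"

definition component :: "('a set \<Rightarrow> bool) \<Rightarrow> 'a set \<Rightarrow> 'a set \<Rightarrow> bool" where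
  "component indep T C \<longleftrightarrow> C \<noteq> {} \<and> C \<subseteq> T \<and>
     restr indep T = dsum (restr indep C) (restr indep (T - C)) \<and>
     connected_matroid C (restr indep C)"

definition nullity :: "('a set \<Rightarrow> bool) \<Rightarrow> 'a set \<Rightarrow> int" where
  "nullity indep T = int (card T) - int (rk indep T)"

text \<open>a_T(T) = c(T) - sum_{U in T, U proper subset of T} a_T(U), a(empty) = 0.
  Computed with fuel n; the fuel card T suffices since proper subsets have smaller card.\<close>
fun a_aux :: "nat \<Rightarrow> ('a set \<Rightarrow> bool) \<Rightarrow> 'a set set \<Rightarrow> 'a set \<Rightarrow> int" where
  "a_aux 0 indep \<T> T = (if T = {} then 0 else nullity indep T)"
| "a_aux (Suc n) indep \<T> T = (if T = {} then 0 else
      nullity indep T - (\<Sum>U \<in> {U \<in> \<T>. U \<subset> T}. a_aux n indep \<T> U))"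

definition a_coef :: "('a set \<Rightarrow> bool) \<Rightarrow> 'a set set \<Rightarrow> 'a set \<Rightarrow> int" where
  "a_coef indep \<T> T = a_aux (card T) indep \<T> T"

end

theory Submission
  imports Defs
begin

text \<open>Call X \<subseteq> T a separator of T if M|T is the direct sum of M|X and M|(T - X). For a separator
  X of some T \<in> \<S> below S, the sum of a over the connected members of \<S> contained in X equals the
  nullity of X. This is proved by induction on #X: connected separators of T are components of T,
  hence lie in \<S>, and there the identity is the recursion defining a; a disconnected X splits into
  two smaller separators, and both sides of the identity are additive over such a splitting. Applied
  to the disconnected S itself, the identity says that the sum of a over the proper subsets of S
  in \<S> already equals c(S), i.e. a(S) = 0.\<close>

definition separator :: "('a set \<Rightarrow> bool) \<Rightarrow> 'a set \<Rightarrow> 'a set \<Rightarrow> bool" where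
  "separator indep T X \<longleftrightarrow> X \<subseteq> T \<and> restr indep T = dsum (restr indep X) (restr indep (T - X))"

definition connected_parts :: "('a set \<Rightarrow> bool) \<Rightarrow> 'a set set \<Rightarrow> 'a set \<Rightarrow> 'a set set" where
  "connected_parts indep \<S> X =
     {U \<in> \<S>. U \<subseteq> X \<and> U \<noteq> {} \<and> connected_matroid U (restr indep U)}"

lemma connected_matroid_empty: "connected_matroid {} indep"
  unfolding connected_matroid_def by auto

lemma finite_connected_parts: "finite X \<Longrightarrow> finite (connected_parts indep \<S> X)"
  unfolding connected_parts_def by (rule finite_subset[of _ "Pow X"]) auto

lemma a_aux_empty: "a_aux n indep \<S> {} = 0"
  by (cases n) auto

lemma a_aux_eq_a_coef:
  "finite T \<Longrightarrow> card T \<le> n \<Longrightarrow> a_aux n indep \<S> T = a_coef indep \<S> T"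
proof (induction "card T" arbitrary: T n rule: less_induct)
  case less
  show ?case
  proof (cases "T = {}")
    case True
    then show ?thesis by (simp add: a_coef_def a_aux_empty)
  next
    case False
    then obtain j where j: "card T = Suc j" using less.prems by (cases "card T") auto
    then obtain m where m: "n = Suc m" "j \<le> m" using less.prems by (cases n) auto
    have "a_aux m indep \<S> U = a_aux j indep \<S> U" if "U \<in> {U \<in> \<S>. U \<subset> T}" for U
    proof -
      have U: "finite U" "card U < card T"
        using that less.prems finite_subset psubset_card_mono by auto
      then show ?thesis using less.hyps[OF U(2) U(1)] j m by simp
    qed
    then have "(\<Sum>U \<in> {U \<in> \<S>. U \<subset> T}. a_aux m indep \<S> U)
        = (\<Sum>U \<in> {U \<in> \<S>. U \<subset> T}. a_aux j indep \<S> U)"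
      by (rule sum.cong[OF refl])
    then show ?thesis using False j m by (simp add: a_coef_def)
  qed
qed

lemma a_coef_empty: "a_coef indep \<S> {} = 0"
  by (simp add: a_coef_def)

lemma a_coef_rec:
  assumes "finite X" "X \<noteq> {}"
  shows "a_coef indep \<S> X = nullity indep X - (\<Sum>U \<in> {U \<in> \<S>. U \<subset> X}. a_coef indep \<S> U)"
proof -
  obtain j where j: "card X = Suc j" using assms by (cases "card X") auto
  have "a_aux j indep \<S> U = a_coef indep \<S> U" if "U \<in> {U \<in> \<S>. U \<subset> X}" for U
  proof (rule a_aux_eq_a_coef)
    show "finite U" using that assms(1) finite_subset by blast
    have "card U < card X" using psubset_card_mono[OF assms(1)] that by blast
    then show "card U \<le> j" using j by simp
  qed
  then have "(\<Sum>U \<in> {U \<in> \<S>. U \<subset> X}. a_aux j indep \<S> U)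
      = (\<Sum>U \<in> {U \<in> \<S>. U \<subset> X}. a_coef indep \<S> U)"
    by (rule sum.cong[OF refl])
  moreover have "a_coef indep \<S> X = a_aux (Suc j) indep \<S> X"
    by (simp only: a_coef_def j)
  ultimately show ?thesis using assms(2) by simp
qed

lemma sum_a_coef_psubset_eq_connected:
  assumes "finite X"
    and "\<forall>U \<in> \<S>. U \<subset> X \<longrightarrow> \<not> connected_matroid U (restr indep U) \<longrightarrow> a_coef indep \<S> U = 0"
  shows "(\<Sum>U \<in> {U \<in> \<S>. U \<subset> X}. a_coef indep \<S> U)
       = (\<Sum>U \<in> connected_parts indep \<S> X - {X}. a_coef indep \<S> U)"
proof (rule sum.mono_neutral_right)
  show "finite {U \<in> \<S>. U \<subset> X}"
    by (rule finite_subset[of _ "Pow X"]) (use assms(1) in auto)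
  show "\<forall>U \<in> {U \<in> \<S>. U \<subset> X} - (connected_parts indep \<S> X - {X}). a_coef indep \<S> U = 0"
    using assms(2) by (auto simp: connected_parts_def a_coef_empty)
qed (auto simp: connected_parts_def)

lemma sum_connected_parts_eq_nullity_if_connected:
  assumes "finite X" "X \<in> \<S>" "X \<noteq> {}" "connected_matroid X (restr indep X)"
    and "\<forall>U \<in> \<S>. U \<subset> X \<longrightarrow> \<not> connected_matroid U (restr indep U) \<longrightarrow> a_coef indep \<S> U = 0"
  shows "(\<Sum>U \<in> connected_parts indep \<S> X. a_coef indep \<S> U) = nullity indep X"
proof -
  have "connected_parts indep \<S> X = insert X (connected_parts indep \<S> X - {X})"
    using assms(2-4) by (auto simp: connected_parts_def)
  then have "(\<Sum>U \<in> connected_parts indep \<S> X. a_coef indep \<S> U)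
      = a_coef indep \<S> X + (\<Sum>U \<in> connected_parts indep \<S> X - {X}. a_coef indep \<S> U)"
    by (metis finite_connected_parts[OF assms(1)] finite_Diff sum.insert Diff_iff insertI1)
  then show ?thesis
    using a_coef_rec[OF assms(1,3)] sum_a_coef_psubset_eq_connected[OF assms(1,5)] by simp
qed

lemma a_coef_eq_0_if_not_connected:
  assumes "finite X" "\<not> connected_matroid X (restr indep X)"
    and "(\<Sum>U \<in> connected_parts indep \<S> X. a_coef indep \<S> U) = nullity indep X"
    and "\<forall>U \<in> \<S>. U \<subset> X \<longrightarrow> \<not> connected_matroid U (restr indep U) \<longrightarrow> a_coef indep \<S> U = 0"
  shows "a_coef indep \<S> X = 0"
proof -
  have "X \<noteq> {}" using assms(2) connected_matroid_empty by auto
  moreover have "connected_parts indep \<S> X - {X} = connected_parts indep \<S> X"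
    using assms(2) by (auto simp: connected_parts_def)
  ultimately show ?thesis
    using a_coef_rec[OF assms(1)] sum_a_coef_psubset_eq_connected[OF assms(1,4)] assms(3) by simp
qed

subsection \<open>Separators\<close>

lemma matroid_indep_empty: "matroid E indep \<Longrightarrow> indep {}"
  unfolding matroid_def by blast

lemma matroid_indep_subset_ground: "matroid E indep \<Longrightarrow> indep I \<Longrightarrow> I \<subseteq> E"
  unfolding matroid_def by blast

context
  fixes E :: "'a set" and indep :: "'a set \<Rightarrow> bool"
  assumes M: "matroid E indep"
begin

lemma finite_ground: "finite E"
  using M unfolding matroid_def by blast

lemma indep_empty: "indep {}"
  using matroid_indep_empty[OF M] .

lemma indep_subset: "indep J \<Longrightarrow> I \<subseteq> J \<Longrightarrow> indep I"
  using M unfolding matroid_def by blast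

lemma indep_augment:
  "indep I \<Longrightarrow> indep J \<Longrightarrow> card I < card J \<Longrightarrow> \<exists>x \<in> J - I. indep (insert x I)"
  using M unfolding matroid_def by blast

lemma matroid_restr:
  assumes "U \<subseteq> E"
  shows "matroid U (restr indep U)"
proof -
  have "finite U" using assms finite_ground finite_subset by blast
  moreover have "\<forall>I J. indep J \<and> J \<subseteq> U \<longrightarrow> I \<subseteq> J \<longrightarrow> indep I \<and> I \<subseteq> U"
    using indep_subset by blast
  moreover have "\<forall>I J. indep I \<and> I \<subseteq> U \<longrightarrow> indep J \<and> J \<subseteq> U \<longrightarrow> card I < card J \<longrightarrow>
      (\<exists>x \<in> J - I. indep (insert x I) \<and> insert x I \<subseteq> U)"
    using indep_augment by blast
  ultimately show ?thesis
    using indep_empty unfolding matroid_def restr_def by blast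
qed

lemma separator_iff:
  assumes "X \<subseteq> T"
  shows "separator indep T X \<longleftrightarrow> (\<forall>I \<subseteq> T. indep (I \<inter> X) \<longrightarrow> indep (I - X) \<longrightarrow> indep I)"
proof
  assume "separator indep T X"
  then have eq: "restr indep T I = dsum (restr indep X) (restr indep (T - X)) I" for I
    unfolding separator_def by simp
  show "\<forall>I \<subseteq> T. indep (I \<inter> X) \<longrightarrow> indep (I - X) \<longrightarrow> indep I"
  proof (intro allI impI)
    fix I assume "I \<subseteq> T" "indep (I \<inter> X)" "indep (I - X)"
    then have "dsum (restr indep X) (restr indep (T - X)) I"
      unfolding dsum_def restr_def by (intro exI[of _ "I \<inter> X"] exI[of _ "I - X"]) auto
    then show "indep I" using eq[of I] unfolding restr_def by simp
  qed
next
  assume H: "\<forall>I \<subseteq> T. indep (I \<inter> X) \<longrightarrow> indep (I - X) \<longrightarrow> indep I"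
  have "indep I \<and> I \<subseteq> T \<longleftrightarrow>
      (\<exists>I1 I2. I = I1 \<union> I2 \<and> (indep I1 \<and> I1 \<subseteq> X) \<and> (indep I2 \<and> I2 \<subseteq> T - X))" for I
  proof
    assume I: "indep I \<and> I \<subseteq> T"
    then show "\<exists>I1 I2. I = I1 \<union> I2 \<and> (indep I1 \<and> I1 \<subseteq> X) \<and> (indep I2 \<and> I2 \<subseteq> T - X)"
      using indep_subset[OF _ Int_lower1, of I X] indep_subset[OF _ Diff_subset, of I X]
      by (intro exI[of _ "I \<inter> X"] exI[of _ "I - X"]) auto
  next
    assume "\<exists>I1 I2. I = I1 \<union> I2 \<and> (indep I1 \<and> I1 \<subseteq> X) \<and> (indep I2 \<and> I2 \<subseteq> T - X)"
    then obtain I1 I2 where I: "I = I1 \<union> I2" "indep I1" "I1 \<subseteq> X" "indep I2" "I2 \<subseteq> T - X"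
      by blast
    have "I \<subseteq> T" "I \<inter> X = I1" "I - X = I2" using I assms by auto
    moreover have "indep (I \<inter> X)" "indep (I - X)" using I calculation(2,3) by simp_all
    ultimately show "indep I \<and> I \<subseteq> T" using H by blast
  qed
  then show "separator indep T X"
    using assms unfolding separator_def restr_def dsum_def by (simp add: fun_eq_iff)
qed

lemma separator_subset: "separator indep T X \<Longrightarrow> X \<subseteq> T"
  unfolding separator_def by blast

lemma separatorI:
  "X \<subseteq> T \<Longrightarrow> (\<And>I. I \<subseteq> T \<Longrightarrow> indep (I \<inter> X) \<Longrightarrow> indep (I - X) \<Longrightarrow> indep I)
    \<Longrightarrow> separator indep T X"
  by (simp add: separator_iff)

lemma separatorD:
  assumes "separator indep T X" "I \<subseteq> T" "indep (I \<inter> X)" "indep (I - X)"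
  shows "indep I"
  using assms separator_iff[OF separator_subset[OF assms(1)]] by blast

lemma separator_refl: "separator indep X X"
  by (rule separatorI) (auto simp: Int_absorb2)

lemma separator_trans:
  assumes TX: "separator indep T X" and XA: "separator indep X A"
  shows "separator indep T A"
proof (rule separatorI)
  have AX: "A \<subseteq> X" "X \<subseteq> T" using assms separator_subset by auto
  then show "A \<subseteq> T" by blast
  fix I assume I: "I \<subseteq> T" "indep (I \<inter> A)" "indep (I - A)"
  have "indep ((I \<inter> X) - A)" "indep (I - X)"
    using AX by (auto intro: indep_subset[OF I(3)])
  moreover have "(I \<inter> X) \<inter> A = I \<inter> A" using AX by blast
  ultimately have "indep (I \<inter> X)" "indep (I - X)"
    using separatorD[OF XA, of "I \<inter> X"] I(2) by auto
  then show "indep I" using separatorD[OF TX] I(1) by blast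
qed

lemma separator_Diff:
  assumes "separator indep T X"
  shows "separator indep T (T - X)"
proof (rule separatorI)
  fix I assume "I \<subseteq> T" "indep (I \<inter> (T - X))" "indep (I - (T - X))"
  moreover have "I \<inter> (T - X) = I - X" "I - (T - X) = I \<inter> X" using \<open>I \<subseteq> T\<close> by auto
  ultimately show "indep I" using separatorD[OF assms] by simp
qed blast

lemma connected_subset_separator:
  assumes "separator indep T X" "T \<subseteq> E" "U \<subseteq> T" "connected_matroid U (restr indep U)"
  shows "U \<subseteq> X \<or> U \<subseteq> T - X"
proof (rule ccontr)
  assume straddle: "\<not> (U \<subseteq> X \<or> U \<subseteq> T - X)"
  have "separator indep U (U \<inter> X)"
  proof (rule separatorI)
    fix I assume "I \<subseteq> U" "indep (I \<inter> (U \<inter> X))" "indep (I - U \<inter> X)"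
    moreover have "I \<inter> (U \<inter> X) = I \<inter> X" "I - U \<inter> X = I - X" using \<open>I \<subseteq> U\<close> by auto
    ultimately show "indep I" using separatorD[OF assms(1)] assms(3) by auto
  qed blast
  then have "restr indep U = dsum (restr indep (U \<inter> X)) (restr indep (U - X))"
    unfolding separator_def by (simp add: Diff_Int)
  moreover have "matroid (U \<inter> X) (restr indep (U \<inter> X))" "matroid (U - X) (restr indep (U - X))"
    using assms(2,3) by (intro matroid_restr; blast)+
  moreover have "U \<inter> X \<noteq> {}" "U - X \<noteq> {}" using straddle assms(3) by auto
  moreover have "(U \<inter> X) \<inter> (U - X) = {}" "(U \<inter> X) \<union> (U - X) = U" by auto
  ultimately show False
    using assms(4) unfolding connected_matroid_def
    by (metis (no_types))
qed

lemma not_connected_obtains_separator: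
  assumes "\<not> connected_matroid X (restr indep X)"
  obtains A where "A \<noteq> {}" "X - A \<noteq> {}" "separator indep X A"
proof -
  obtain A B i1 i2 where d: "A \<noteq> {}" "B \<noteq> {}" "A \<inter> B = {}" "A \<union> B = X"
    "matroid A i1" "matroid B i2" "restr indep X = dsum i1 i2"
    using assms unfolding connected_matroid_def by blast
  note i1 = matroid_indep_subset_ground[OF d(5)] matroid_indep_empty[OF d(5)]
  note i2 = matroid_indep_subset_ground[OF d(6)] matroid_indep_empty[OF d(6)]
  have eq: "indep I \<and> I \<subseteq> X \<longleftrightarrow> (\<exists>I1 I2. I = I1 \<union> I2 \<and> i1 I1 \<and> i2 I2)" for I
    using fun_cong[OF d(7), of I] unfolding restr_def dsum_def .
  have split: "\<exists>J1 J2. J = J1 \<union> J2 \<and> i1 J1 \<and> i2 J2 \<and> J1 \<subseteq> A \<and> J2 \<subseteq> B"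
    if "indep J" "J \<subseteq> X" for J
  proof -
    have "indep J \<and> J \<subseteq> X" using that ..
    from eq[of J, THEN iffD1, OF this]
    obtain J1 J2 where "J = J1 \<union> J2" "i1 J1" "i2 J2" by blast
    then show ?thesis using i1(1)[of J1] i2(1)[of J2] by blast
  qed
  have on_A: "i1 J" if J: "indep J" "J \<subseteq> A" for J
  proof -
    have "J \<subseteq> X" using J(2) d(4) by blast
    obtain J1 J2 where parts: "J = J1 \<union> J2" "i1 J1" "J2 \<subseteq> B"
      using split[OF J(1) \<open>J \<subseteq> X\<close>] by blast
    then have "J2 = {}" using J(2) d(3) by blast
    then show ?thesis using parts by simp
  qed
  have on_B: "i2 J" if J: "indep J" "J \<subseteq> B" for J
  proof -
    have "J \<subseteq> X" using J(2) d(4) by blast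
    obtain J1 J2 where parts: "J = J1 \<union> J2" "i2 J2" "J1 \<subseteq> A"
      using split[OF J(1) \<open>J \<subseteq> X\<close>] by blast
    then have "J1 = {}" using J(2) d(3) by blast
    then show ?thesis using parts by simp
  qed
  have "separator indep X A"
  proof (rule separatorI)
    show "A \<subseteq> X" using d(4) by blast
    fix I assume I: "I \<subseteq> X" "indep (I \<inter> A)" "indep (I - A)"
    have "I - A \<subseteq> B" using I(1) d(4) by blast
    then have "i1 (I \<inter> A)" "i2 (I - A)" using on_A on_B I(2,3) by auto
    moreover have "I = (I \<inter> A) \<union> (I - A)" by blast
    ultimately show "indep I" using eq[of I, THEN iffD2] by blast
  qed
  moreover have "X - A \<noteq> {}" using d(2,3,4) by blast
  ultimately show ?thesis using that d(1) by blast
qed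

subsection \<open>Additivity over separators\<close>

lemma finite_indep_cards: "finite X \<Longrightarrow> finite {card I | I. I \<subseteq> X \<and> indep I}"
  by (rule finite_subset[of _ "card ` Pow X"]) blast+

lemma card_le_rk:
  assumes "finite X" "I \<subseteq> X" "indep I"
  shows "card I \<le> rk indep X"
  unfolding rk_def using assms(2,3) by (intro Max_ge[OF finite_indep_cards[OF assms(1)]]) blast

lemma obtain_rk_basis:
  assumes "finite X"
  obtains I where "I \<subseteq> X" "indep I" "card I = rk indep X"
proof -
  have "finite {card I | I. I \<subseteq> X \<and> indep I}" using finite_indep_cards[OF assms] .
  moreover have "{card I | I. I \<subseteq> X \<and> indep I} \<noteq> {}"
    using indep_empty empty_subsetI by (auto simp only: Collect_empty_eq)
  ultimately have "rk indep X \<in> {card I | I. I \<subseteq> X \<and> indep I}"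
    unfolding rk_def by (rule Max_in)
  then obtain I where "I \<subseteq> X" "indep I" "card I = rk indep X" by (auto simp only: mem_Collect_eq)
  then show ?thesis by (rule that)
qed

lemma rk_empty: "rk indep {} = 0"
  using obtain_rk_basis[of "{}"] by auto

lemma rk_separator_add:
  assumes "finite T" "separator indep T X"
  shows "rk indep T = rk indep X + rk indep (T - X)"
proof (rule antisym)
  have XT: "X \<subseteq> T" using assms(2) separator_subset by blast
  have fin: "finite X" "finite (T - X)" using assms(1) XT finite_subset by auto
  obtain I where I: "I \<subseteq> T" "indep I" "card I = rk indep T"
    using obtain_rk_basis[OF assms(1)] .
  have "card I = card (I \<inter> X) + card (I - X)"
    using I(1) assms(1) finite_subset by (metis card_Int_Diff)
  moreover have "card (I \<inter> X) \<le> rk indep X"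
    using fin(1) Int_lower2 indep_subset[OF I(2) Int_lower1] by (rule card_le_rk)
  moreover have "card (I - X) \<le> rk indep (T - X)"
    using fin(2) _ indep_subset[OF I(2) Diff_subset] by (rule card_le_rk) (use I(1) in blast)
  ultimately show "rk indep T \<le> rk indep X + rk indep (T - X)" using I(3) by linarith
  obtain I1 where I1: "I1 \<subseteq> X" "indep I1" "card I1 = rk indep X"
    using obtain_rk_basis[OF fin(1)] .
  obtain I2 where I2: "I2 \<subseteq> T - X" "indep I2" "card I2 = rk indep (T - X)"
    using obtain_rk_basis[OF fin(2)] .
  have "(I1 \<union> I2) \<inter> X = I1" "(I1 \<union> I2) - X = I2" using I1(1) I2(1) by auto
  then have "indep ((I1 \<union> I2) \<inter> X)" "indep ((I1 \<union> I2) - X)" using I1(2) I2(2) by simp_all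
  moreover have "I1 \<union> I2 \<subseteq> T" using I1(1) I2(1) XT by blast
  ultimately have "indep (I1 \<union> I2)" by (rule separatorD[OF assms(2), rotated])
  then have "card (I1 \<union> I2) \<le> rk indep T"
    using I1(1) I2(1) XT by (intro card_le_rk assms(1)) auto
  moreover have "card (I1 \<union> I2) = card I1 + card I2"
    using I1(1) I2(1) fin finite_subset by (intro card_Un_disjoint) auto
  ultimately show "rk indep X + rk indep (T - X) \<le> rk indep T" using I1(3) I2(3) by simp
qed

lemma nullity_separator_add:
  assumes "finite T" "separator indep T X"
  shows "nullity indep T = nullity indep X + nullity indep (T - X)"
proof -
  have "X \<subseteq> T" using assms(2) separator_subset by blast
  then have "card T = card X + card (T - X)"
    using assms(1) finite_subset by (metis card_Diff_subset card_mono le_add_diff_inverse)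
  then show ?thesis using rk_separator_add[OF assms] unfolding nullity_def by simp
qed

lemma connected_parts_separator_union:
  assumes "T \<subseteq> E" "separator indep T X"
  shows "connected_parts indep \<S> T = connected_parts indep \<S> X \<union> connected_parts indep \<S> (T - X)"
  using connected_subset_separator[OF assms(2,1)] separator_subset[OF assms(2)]
  unfolding connected_parts_def by blast

lemma sum_connected_parts_separator_add:
  assumes "T \<subseteq> E" "separator indep T X"
  shows "(\<Sum>U \<in> connected_parts indep \<S> T. a_coef indep \<S> U)
       = (\<Sum>U \<in> connected_parts indep \<S> X. a_coef indep \<S> U)
       + (\<Sum>U \<in> connected_parts indep \<S> (T - X). a_coef indep \<S> U)"
proof -
  have "finite T" using assms(1) finite_ground finite_subset by blast
  then have "finite X" "finite (T - X)"
    using separator_subset[OF assms(2)] finite_subset by auto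
  moreover have "connected_parts indep \<S> X \<inter> connected_parts indep \<S> (T - X) = {}"
    unfolding connected_parts_def by blast
  ultimately show ?thesis
    unfolding connected_parts_separator_union[OF assms]
    by (intro sum.union_disjoint finite_connected_parts)
qed

text \<open>The two statements are proved simultaneously: the second one, for the proper subsets of X,
  is what lets the recursion for a see only connected sets.\<close>

lemma sum_connected_parts_eq_nullity:
  assumes "S \<subseteq> E"
    and closed: "\<forall>T \<in> \<S>. T \<subseteq> S \<longrightarrow> (\<forall>C. component indep T C \<longrightarrow> C \<in> \<S>)"
    and "X \<subseteq> S"
  shows "(\<forall>T \<in> \<S>. T \<subseteq> S \<longrightarrow> separator indep T X \<longrightarrow>
           (\<Sum>U \<in> connected_parts indep \<S> X. a_coef indep \<S> U) = nullity indep X)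
       \<and> (X \<in> \<S> \<longrightarrow> \<not> connected_matroid X (restr indep X) \<longrightarrow> a_coef indep \<S> X = 0)"
  using assms(3)
proof (induction "card X" arbitrary: X rule: less_induct)
  case less
  have X: "X \<subseteq> E" "finite X"
    using less.prems assms(1) finite_subset[OF _ finite_ground] by auto
  have IH: "(\<forall>T \<in> \<S>. T \<subseteq> S \<longrightarrow> separator indep T Y \<longrightarrow>
           (\<Sum>U \<in> connected_parts indep \<S> Y. a_coef indep \<S> U) = nullity indep Y)
       \<and> (Y \<in> \<S> \<longrightarrow> \<not> connected_matroid Y (restr indep Y) \<longrightarrow> a_coef indep \<S> Y = 0)"
    if "Y \<subset> X" for Y
  proof -
    have "Y \<subseteq> S" using that less.prems by blast
    then show ?thesis using less.hyps[OF psubset_card_mono[OF X(2) that]] by simp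
  qed
  have vanish:
    "\<forall>U \<in> \<S>. U \<subset> X \<longrightarrow> \<not> connected_matroid U (restr indep U) \<longrightarrow> a_coef indep \<S> U = 0"
    using IH by simp
  have sum_eq: "(\<Sum>U \<in> connected_parts indep \<S> X. a_coef indep \<S> U) = nullity indep X"
    if T: "T \<in> \<S>" "T \<subseteq> S" "separator indep T X" for T
  proof (cases "connected_matroid X (restr indep X)")
    case True
    show ?thesis
    proof (cases "X = {}")
      case True
      then have "connected_parts indep \<S> X = {}" unfolding connected_parts_def by blast
      then show ?thesis using \<open>X = {}\<close> by (simp add: nullity_def rk_empty)
    next
      case False
      with \<open>connected_matroid X (restr indep X)\<close> T(3) have "component indep T X"
        unfolding component_def separator_def by blast
      then have "X \<in> \<S>" using closed T(1,2) by blast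
      then show ?thesis
        using sum_connected_parts_eq_nullity_if_connected[OF X(2) _ False True vanish] by blast
    qed
  next
    case False
    then obtain A where A: "A \<noteq> {}" "X - A \<noteq> {}" "separator indep X A"
      by (rule not_connected_obtains_separator)
    then have "A \<subset> X" "X - A \<subset> X" using separator_subset by blast+
    moreover have "separator indep T A" "separator indep T (X - A)"
      using separator_trans[OF T(3)] A(3) separator_Diff by blast+
    ultimately have "(\<Sum>U \<in> connected_parts indep \<S> A. a_coef indep \<S> U) = nullity indep A"
      "(\<Sum>U \<in> connected_parts indep \<S> (X - A). a_coef indep \<S> U) = nullity indep (X - A)"
      using IH T(1,2) by blast+
    then show ?thesis
      using sum_connected_parts_separator_add[OF X(1) A(3)] nullity_separator_add[OF X(2) A(3)]
      by simp
  qed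
  show ?case
  proof (intro conjI ballI impI)
    show "(\<Sum>U \<in> connected_parts indep \<S> X. a_coef indep \<S> U) = nullity indep X"
      if "T \<in> \<S>" "T \<subseteq> S" "separator indep T X" for T
      using sum_eq that .
    assume "X \<in> \<S>" "\<not> connected_matroid X (restr indep X)"
    then show "a_coef indep \<S> X = 0"
      using a_coef_eq_0_if_not_connected[OF X(2) _ sum_eq vanish] less.prems separator_refl
      by blast
  qed
qed

end

theorem proposition6p5:
  fixes E :: "'a set" and indep :: "'a set \<Rightarrow> bool"
    and \<S> :: "'a set set" and S :: "'a set"
  assumes "matroid E indep"
    and "\<S> \<subseteq> Pow E"
    and "S \<in> \<S>"
    and "\<not> connected_matroid S (restr indep S)"
    and "\<forall>T \<in> \<S>. T \<subseteq> S \<longrightarrow> (\<forall>C. component indep T C \<longrightarrow> C \<in> \<S>)"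
  shows "a_coef indep \<S> S = 0"
proof -
  have "S \<subseteq> E" using assms(2,3) by blast
  from sum_connected_parts_eq_nullity[OF assms(1) this assms(5) order_refl]
  show ?thesis using assms(3,4) by blast
qed

end
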